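(* Let $h\ge1$, $\omega=e^{2\pi\mathrm{i}/h}$, and consider walks with steps in $\{0,\pm1,\dots,\pm h\}$. For $k\ge1$ and $n\ge0$, the number of positive walks of length $n$ from the origin to altitude $k$ (walks $0=y_0,\dots,y_n=k$ with $y_i\ge1$ for $1\le i\le n$) and the number of positive meanders of length $n$ (walks $0=y_0,\dots,y_n$ with $y_i\ge1$ for $1\le i\le n$) are respectively $$[z^n]G_{0,k}(z)=\sum_{n_1+\dots+n_h=nh}\ \sum_{i_1+\dots+i_h=k}\ \prod_{j=1}^h\frac{i_j}{n_j}\binom{n_j/h}{n_j-i_j}_{2h+1}\ \omega^{\sum_{j=1}^h(j-1)n_j},$$ $$[z^n]M_{>0}(z)=\sum_{n_1+\dots+n_h=nh}\ \sum_{i_1,\dots,i_h\ge0}\ \prod_{j=1}^h\frac{i_j}{n_j}\binom{n_j/h}{n_j-i_j}_{2h+1}\ \omega^{\sum_{j=1}^h(j-1)n_j},$$ where all $n_j,i_j$ range over nonnegative integers.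
   Context: For real $\alpha$, integer $m\ge1$ and integer $k$, $\binom{\alpha}{k}_m:=[u^k](1+u+\dots+u^{m-1})^{\alpha}$ (formal power series with constant term $1$; $0$ for $k<0$). In the products, the factor $\frac{i}{n}\binom{n/h}{n-i}_{2h+1}$ stands for $[z^n]U^i(z)$, where $U(z)=z+\cdots$ is the power series root of $1-z^h(U^{-h}+\dots+U^{h})=0$; concretely it equals $1$ if $i=n=0$ and $0$ if exactly one of $i,n$ is $0$. *)

theory Defs
  imports Complex_Main "HOL-Computational_Algebra.Formal_Power_Series"
    "HOL-Library.FuncSet" "HOL-Analysis.Infinite_Sum"
begin

(* Polynomial coefficient binom(alpha,k)_m = [u^k] (1 + u + ... + u^(m-1))^alpha,
   the power taken as the formal power series (1+X)^alpha composed with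
   g = u + ... + u^(m-1) (constant term 0). *)
definition gbinom_m :: "real \<Rightarrow> nat \<Rightarrow> int \<Rightarrow> real" where
  "gbinom_m \<alpha> m k =
     (if k < 0 then 0
      else fps_nth (fps_compose (fps_binomial \<alpha>) (\<Sum>j=1..<m. fps_X ^ j)) (nat k))"

definition Ufac :: "nat \<Rightarrow> nat \<Rightarrow> nat \<Rightarrow> complex" where
  "Ufac h i n =
     (if n = 0 then (if i = 0 then 1 else 0)
      else of_nat i / of_nat n *
           complex_of_real (gbinom_m (real n / real h) (2*h+1) (int n - int i)))"

definition omega :: "nat \<Rightarrow> complex" where
  "omega h = exp (2 * pi * \<i> / of_nat h)"

(* walks as lists of steps in {-h..h}; y_i = sum of the first i steps *)
definition pos_walks :: "nat \<Rightarrow> nat \<Rightarrow> int \<Rightarrow> int list set" where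
  "pos_walks h n k = {s. length s = n \<and> set s \<subseteq> {- int h..int h} \<and>
      (\<forall>i\<in>{1..n}. sum_list (take i s) \<ge> 1) \<and> sum_list s = k}"

definition pos_meanders :: "nat \<Rightarrow> nat \<Rightarrow> int list set" where
  "pos_meanders h n = {s. length s = n \<and> set s \<subseteq> {- int h..int h} \<and>
      (\<forall>i\<in>{1..n}. sum_list (take i s) \<ge> 1)}"

definition tuples_sum :: "nat \<Rightarrow> nat \<Rightarrow> (nat \<Rightarrow> nat) set" where
  "tuples_sum h N = {x \<in> {1..h} \<rightarrow>\<^sub>E (UNIV :: nat set). (\<Sum>j=1..h. x j) = N}"

definition term46 :: "nat \<Rightarrow> (nat \<Rightarrow> nat) \<Rightarrow> (nat \<Rightarrow> nat) \<Rightarrow> complex" where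
  "term46 h ns is = (\<Prod>j=1..h. Ufac h (is j) (ns j)) * omega h ^ (\<Sum>j=1..h. (j - 1) * ns j)"

end

(* Lagrange inversion identifies the factor (i/n) binom(n/h, n-i)_(2h+1) with [z^n] U^i for the
   series U = z (1 + U + ... + U^(2h))^(1/h).  As U^h = z^h (1 + U + ... + U^(2h)), the series
   U_j(z) = U(omega^(j-1) z), j = 1..h, are the small roots of the kernel of the walks, and the two
   double sums are the coefficients of z^(nh) in the complete homogeneous symmetric polynomial
   h_k(U_1, ..., U_h), resp. in their sum over k.  Kernel method: the reciprocals 1/U_j are roots of
   y^h - z^h (1 + y + ... + y^(2h)), so prod_j (1 - U_j y) divides it, and comparing coefficients of
   y^(k+h) gives h_k = z^h (h_(k-h) + ... + h_(k+h)) for k >= 1.  This is the last-step recurrence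
   of positive walks ending at altitude k, with the same initial values; meanders are positive walks
   ending anywhere in 0..nh. *)

theory Submission
  imports Defs "HOL-Computational_Algebra.Formal_Laurent_Series" "HOL-Computational_Algebra.Polynomial_FPS"
    "HOL-Analysis.Complex_Transcendental"
begin

unbundle no vec_syntax

definition weak_compositions :: "'b set \<Rightarrow> nat \<Rightarrow> ('b \<Rightarrow> nat) set" where
  "weak_compositions A N = {x \<in> A \<rightarrow>\<^sub>E UNIV. sum x A = N}"

lemma finite_weak_compositions: "finite A \<Longrightarrow> finite (weak_compositions A N)"
proof (rule finite_subset)
  show "weak_compositions A N \<subseteq> A \<rightarrow>\<^sub>E {0..N}" if "finite A"
    using that by (auto simp: weak_compositions_def PiE_def Pi_def intro!: member_le_sum[of _ A, simplified])
qed (auto intro: finite_PiE)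

lemma weak_compositions_0: "finite A \<Longrightarrow> weak_compositions A 0 = {restrict (\<lambda>_. 0) A}"
  by (auto simp: weak_compositions_def PiE_def extensional_def fun_eq_iff)

lemma fps_prod_nth_weak_compositions:
  fixes f :: "'b \<Rightarrow> 'a::comm_ring_1 fps"
  assumes "finite A"
  shows "(\<Prod>a\<in>A. f a) $ N = (\<Sum>x\<in>weak_compositions A N. \<Prod>a\<in>A. f a $ x a)"
  using assms
proof (induction A arbitrary: N rule: finite_induct)
  case empty
  then show ?case by (cases N) (simp_all add: weak_compositions_0, simp add: weak_compositions_def)
next
  case (insert b A)
  let ?W = "weak_compositions"
  have "(\<Prod>a\<in>insert b A. f a) $ N = (\<Sum>i=0..N. f b $ i * (\<Prod>a\<in>A. f a) $ (N - i))"
    using insert.hyps by (simp add: fps_mult_nth)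
  also have "\<dots> = (\<Sum>(i,y)\<in>Sigma {0..N} (\<lambda>i. ?W A (N-i)). f b $ i * (\<Prod>a\<in>A. f a $ y a))"
    by (simp add: insert.IH sum_distrib_left sum.Sigma finite_weak_compositions insert.hyps)
  also have "\<dots> = (\<Sum>x\<in>?W (insert b A) N. \<Prod>a\<in>insert b A. f a $ x a)"
  proof (rule sum.reindex_bij_witness[where i="\<lambda>x. (x b, restrict x A)" and j="\<lambda>(i,y). y(b:=i)"])
    fix x assume x: "x \<in> ?W (insert b A) N"
    then show "(case (x b, restrict x A) of (i, y) \<Rightarrow> y(b := i)) = x"
      using insert.hyps by (auto simp: weak_compositions_def PiE_def extensional_def fun_eq_iff)
    have "sum (restrict x A) A = sum x A" by (rule sum.cong) auto
    with x show "(x b, restrict x A) \<in> Sigma {0..N} (\<lambda>i. ?W A (N - i))"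
      using insert.hyps by (auto simp: weak_compositions_def)
  next
    fix p assume "p \<in> Sigma {0..N} (\<lambda>i. ?W A (N - i))"
    then obtain i y where p: "p = (i, y)" "i \<le> N" "y \<in> A \<rightarrow>\<^sub>E UNIV" "sum y A = N - i"
      by (auto simp: weak_compositions_def)
    moreover have "sum (y(b:=i)) A = sum y A" "(\<Prod>a\<in>A. f a $ (y(b:=i)) a) = (\<Prod>a\<in>A. f a $ y a)"
      using insert.hyps by (auto intro!: sum.cong prod.cong)
    ultimately show "(case p of (i, y) \<Rightarrow> y(b := i)) \<in> ?W (insert b A) N"
      and "((case p of (i, y) \<Rightarrow> y(b := i)) b, restrict (case p of (i, y) \<Rightarrow> y(b := i)) A) = p"
      and "(\<Prod>a\<in>insert b A. f a $ (case p of (i, y) \<Rightarrow> y(b := i)) a) =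
             (case p of (i, y) \<Rightarrow> f b $ i * (\<Prod>a\<in>A. f a $ y a))"
      using insert.hyps by (auto simp: weak_compositions_def PiE_def extensional_def fun_eq_iff)
  qed
  finally show ?case .
qed

section \<open>Lagrange inversion\<close>

definition lagrange_inverse :: "'a::field fps \<Rightarrow> 'a fps" where
  "lagrange_inverse \<phi> = fps_inv (fps_X * inverse \<phi>)"

context
  fixes \<phi> :: "'a::field_char_0 fps"
  assumes \<phi>_0: "\<phi> $ 0 = 1"
begin

lemma times_fps_X_times_inverse: "\<phi> * (fps_X * inverse \<phi>) = fps_X"
  using \<phi>_0 by (simp add: mult.left_commute inverse_mult_eq_1')

lemma fps_X_times_inverse_nth_0: "(fps_X * inverse \<phi>) $ 0 = 0"
  and fps_X_times_inverse_nth_1: "(fps_X * inverse \<phi>) $ 1 = 1"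
  by (simp_all add: fps_X_mult_nth \<phi>_0)

lemma lagrange_inverse_nth_0: "lagrange_inverse \<phi> $ 0 = 0"
  by (simp add: lagrange_inverse_def fps_inv_def)

lemma lagrange_inverse_compose: "lagrange_inverse \<phi> oo (fps_X * inverse \<phi>) = fps_X"
  unfolding lagrange_inverse_def
  by (rule fps_inv) (simp_all add: fps_X_times_inverse_nth_0 fps_X_times_inverse_nth_1 \<phi>_0)

lemma compose_lagrange_inverse: "(fps_X * inverse \<phi>) oo lagrange_inverse \<phi> = fps_X"
  unfolding lagrange_inverse_def
  by (rule fps_inv_right) (simp_all add: fps_X_times_inverse_nth_0 fps_X_times_inverse_nth_1 \<phi>_0)

lemma lagrange_inverse_eq: "lagrange_inverse \<phi> = fps_X * (\<phi> oo lagrange_inverse \<phi>)"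
proof -
  let ?V = "lagrange_inverse \<phi>"
  have "fps_X = (fps_X oo ?V) * (inverse \<phi> oo ?V)"
    using compose_lagrange_inverse by (simp add: fps_compose_mult_distrib lagrange_inverse_nth_0)
  also have "\<dots> = ?V * inverse (\<phi> oo ?V)"
    using \<phi>_0 by (simp add: fps_inverse_compose lagrange_inverse_nth_0)
  finally have "fps_X * (\<phi> oo ?V) = ?V * (inverse (\<phi> oo ?V) * (\<phi> oo ?V))"
    by (simp add: mult.assoc)
  then show ?thesis
    using \<phi>_0 by (simp add: inverse_mult_eq_1)
qed

text \<open>The coefficient is the residue of \<open>F' / F\<^sup>j\<^sup>+\<^sup>1 = -(1/j) (F\<^sup>-\<^sup>j)'\<close>,
  where \<open>F = X / \<phi>\<close>, and a derivative has no residue.\<close>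
lemma power_times_deriv_nth_eq_0:
  assumes "j \<ge> 1"
  shows "(\<phi> ^ (j + 1) * fps_deriv (fps_X * inverse \<phi>)) $ j = 0"
proof -
  define G where "G = fls_shift 1 (fps_to_fls \<phi>)"
  define F where "F = fps_to_fls (fps_X * inverse \<phi>)"
  have "F * G = fps_to_fls (inverse \<phi> * \<phi>)"
    by (simp add: F_def G_def fls_times_fps_to_fls fls_X_times_conv_shift fls_shifted_times_simps)
  then have FG: "F * G = 1"
    using \<phi>_0 by (simp add: inverse_mult_eq_1)
  have "G * fls_deriv (F * G) = 0" by (simp add: FG)
  then have "(F * G) * fls_deriv G + G * fls_deriv F * G = 0"
    by (simp add: algebra_simps)
  then have dG: "fls_deriv G = - G * fls_deriv F * G"
    using FG by (simp add: eq_neg_iff_add_eq_0)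
  have "fls_deriv (G ^ j) = - of_nat j * (G ^ (j - 1) * G * G) * fls_deriv F"
    by (simp add: fls_deriv_power dG algebra_simps)
  also have "G ^ (j - 1) * G * G = G ^ (j + 1)"
    using assms by (simp flip: power_Suc2)
  finally have "of_nat j * fls_residue (G ^ (j + 1) * fls_deriv F) = 0"
    using fls_residue_deriv[of "G ^ j"] by (simp add: fls_of_nat mult.assoc)
  then have "fls_residue (G ^ (j + 1) * fls_deriv F) = 0"
    using assms by simp
  moreover have "G ^ (j + 1) * fls_deriv F =
      fls_shift (int (j + 1)) (fps_to_fls (\<phi> ^ (j + 1) * fps_deriv (fps_X * inverse \<phi>)))"
    by (simp add: G_def F_def fls_deriv_fps_to_fls fls_shifted_pow fps_to_fls_power
        fls_times_fps_to_fls fls_shifted_times_simps)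
  ultimately show ?thesis by simp
qed

lemma power_times_deriv_power_nth:
  assumes "m \<ge> 1" and "n \<le> m"
  shows "(\<phi> ^ m * fps_deriv ((fps_X * inverse \<phi>) ^ n)) $ (m - 1) = (if n = m then of_nat m else 0)"
proof (cases "n = 0")
  case True
  then show ?thesis using assms by simp
next
  case False
  define F where "F = fps_X * inverse \<phi>"
  have "\<phi> ^ m = \<phi> ^ (m - n + 1) * \<phi> ^ (n - 1)"
    using False assms by (simp only: power_add [symmetric]) simp
  then have "\<phi> ^ m * fps_deriv (F ^ n) =
      fps_const (of_nat n) * (\<phi> ^ (m - n + 1) * fps_deriv F) * (\<phi> * F) ^ (n - 1)"
    by (simp add: fps_deriv_power power_mult_distrib mult_ac)
  also have "\<phi> * F = fps_X"
    by (simp add: F_def times_fps_X_times_inverse)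
  finally have "(\<phi> ^ m * fps_deriv (F ^ n)) $ (m - 1) = of_nat n * (\<phi> ^ (m - n + 1) * fps_deriv F) $ (m - n)"
    using False assms by (simp add: fps_X_power_mult_right_nth)
  then show ?thesis
    using False assms power_times_deriv_nth_eq_0[of "m - n"]
    by (auto simp: \<phi>_0 fps_X_times_inverse_nth_1 F_def)
qed

lemma power_times_deriv_high_power_nth:
  assumes "m \<ge> 1"
  shows "(\<phi> ^ m * fps_deriv ((fps_X * inverse \<phi>) ^ Suc m * S)) $ (m - 1) = 0"
proof -
  define F where "F = fps_X * inverse \<phi>"
  have "fps_deriv (F ^ Suc m * S) = F ^ m * (fps_const (of_nat (Suc m)) * fps_deriv F * S + F * fps_deriv S)"
    by (simp add: fps_deriv_power algebra_simps del: power_Suc) (simp add: algebra_simps)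
  then have "\<phi> ^ m * fps_deriv (F ^ Suc m * S) =
      (\<phi> * F) ^ m * (fps_const (of_nat (Suc m)) * fps_deriv F * S + F * fps_deriv S)"
    by (simp add: power_mult_distrib mult.assoc)
  also have "\<phi> * F = fps_X"
    by (simp add: F_def times_fps_X_times_inverse)
  finally have "(\<phi> ^ m * fps_deriv (F ^ Suc m * S)) $ (m - 1) = 0"
    using assms by (simp add: fps_X_power_mult_nth del: power_Suc)
  then show ?thesis unfolding F_def .
qed

lemma fps_cutoff_eq_sum: "fps_cutoff (Suc m) g = (\<Sum>n\<le>m. fps_const (g $ n) * fps_X ^ n)"
  by (rule fps_ext) (simp add: fps_sum_nth fps_X_power_nth if_distrib sum.delta' less_Suc_eq_le cong: if_cong)

lemma lagrange_residue:
  assumes "m \<ge> 1"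
  shows "(\<phi> ^ m * fps_deriv (g oo fps_X * inverse \<phi>)) $ (m - 1) = of_nat m * g $ m"
proof -
  define F where "F = fps_X * inverse \<phi>"
  have F_0: "F $ 0 = 0"
    by (simp add: F_def fps_X_times_inverse_nth_0)
  have "g = fps_X ^ Suc m * fps_shift (Suc m) g + (\<Sum>n\<le>m. fps_const (g $ n) * fps_X ^ n)"
    using fps_shift_cutoff' [of "Suc m" g] by (simp add: fps_cutoff_eq_sum)
  then have "g oo F = (fps_X ^ Suc m * fps_shift (Suc m) g + (\<Sum>n\<le>m. fps_const (g $ n) * fps_X ^ n)) oo F"
    by (rule arg_cong)
  also have "\<dots> = F ^ Suc m * (fps_shift (Suc m) g oo F) + (\<Sum>n\<le>m. fps_const (g $ n) * F ^ n)"
    by (simp add: fps_compose_add_distrib fps_compose_mult_distrib [OF F_0] fps_X_power_compose [OF F_0]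
        fps_compose_sum_distrib del: power_Suc)
  finally have "(\<phi> ^ m * fps_deriv (g oo F)) $ (m - 1) =
      (\<phi> ^ m * fps_deriv (F ^ Suc m * (fps_shift (Suc m) g oo F))) $ (m - 1) +
      (\<Sum>n\<le>m. g $ n * (\<phi> ^ m * fps_deriv (F ^ n)) $ (m - 1))"
    by (simp add: fps_deriv_sum distrib_left sum_distrib_left fps_sum_nth mult.left_commute [of "\<phi> ^ m"]
        fps_mult_left_const_nth del: power_Suc)
  also have "\<dots> = (\<Sum>n\<le>m. g $ n * (if n = m then of_nat m else 0))"
    using power_times_deriv_high_power_nth [OF assms, of "fps_shift (Suc m) g oo F", folded F_def]
      power_times_deriv_power_nth [OF assms, folded F_def] by simp
  also have "\<dots> = of_nat m * g $ m"
    by (simp add: if_distrib sum.delta' mult.commute cong: if_cong)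
  finally show ?thesis
    unfolding F_def .
qed

theorem lagrange_inversion:
  assumes "m \<ge> 1"
  shows "of_nat m * (lagrange_inverse \<phi> ^ i) $ m = of_nat i * (if i \<le> m then (\<phi> ^ m) $ (m - i) else 0)"
proof -
  have "lagrange_inverse \<phi> ^ i oo fps_X * inverse \<phi> = fps_X ^ i"
    by (simp add: fps_compose_power [symmetric] fps_X_times_inverse_nth_0 lagrange_inverse_compose)
  then have "of_nat m * (lagrange_inverse \<phi> ^ i) $ m = (\<phi> ^ m * fps_deriv (fps_X ^ i)) $ (m - 1)"
    using lagrange_residue [OF assms, of "lagrange_inverse \<phi> ^ i"] by simp
  also have "\<dots> = (fps_const (of_nat i) * (\<phi> ^ m * fps_X ^ (i - 1))) $ (m - 1)"
    by (simp add: fps_deriv_power mult_ac)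
  also have "\<dots> = of_nat i * (if i \<le> m then (\<phi> ^ m) $ (m - i) else 0)"
    using assms by (cases i) (auto simp: fps_X_power_mult_right_nth)
  finally show ?thesis .
qed

end

section \<open>The kernel method\<close>

definition complete_homogeneous :: "'b set \<Rightarrow> ('b \<Rightarrow> 'a::comm_semiring_1) \<Rightarrow> nat \<Rightarrow> 'a" where
  "complete_homogeneous A v k = (\<Sum>x\<in>weak_compositions A k. \<Prod>a\<in>A. v a ^ x a)"

lemma complete_homogeneous_0: "finite A \<Longrightarrow> complete_homogeneous A v 0 = 1"
  by (simp add: complete_homogeneous_def weak_compositions_0)

lemma complete_homogeneous_zero:
  assumes "k \<ge> 1"
  shows "complete_homogeneous A (\<lambda>_. 0) k = (0 :: 'a::comm_semiring_1)"
  unfolding complete_homogeneous_def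
proof (intro sum.neutral ballI)
  show "(\<Prod>a\<in>A. 0 ^ x a) = (0 :: 'a)" if "x \<in> weak_compositions A k" for x
    unfolding power_sum [symmetric] using that assms by (simp add: weak_compositions_def power_0_left)
qed

lemma fps_inverse_one_minus_const_fps_X:
  fixes v :: "'a::field"
  shows "inverse (1 - fps_const v * fps_X) = Abs_fps (\<lambda>n. v ^ n)"
proof (rule fps_inverse_unique)
  show "(1 - fps_const v * fps_X) * Abs_fps (\<lambda>n. v ^ n) = 1"
  proof (rule fps_ext)
    show "((1 - fps_const v * fps_X) * Abs_fps (\<lambda>n. v ^ n)) $ n = 1 $ n" for n
      by (cases n) (simp_all add: algebra_simps fps_X_mult_nth mult.assoc)
  qed
qed

lemma prod_inverse_one_minus_const_fps_X_nth:
  fixes v :: "'b \<Rightarrow> 'a::field"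
  assumes "finite A"
  shows "(\<Prod>a\<in>A. inverse (1 - fps_const (v a) * fps_X)) $ k = complete_homogeneous A v k"
  using assms by (simp add: fps_prod_nth_weak_compositions fps_inverse_one_minus_const_fps_X
      complete_homogeneous_def)

lemma prod_one_minus_linear_dvd:
  fixes v :: "'b \<Rightarrow> 'a::field" and p :: "'a poly"
  assumes "finite A" "inj_on v A" "\<And>a. a \<in> A \<Longrightarrow> v a \<noteq> 0"
    and "\<And>a. a \<in> A \<Longrightarrow> poly p (inverse (v a)) = 0"
  shows "(\<Prod>a\<in>A. [:1, - v a:]) dvd p"
  using assms
proof (induction A rule: finite_induct)
  case (insert b A)
  define x where "x = inverse (v b)"
  obtain q where q: "p = (\<Prod>a\<in>A. [:1, - v a:]) * q"
    using insert by (auto simp: inj_on_insert elim!: dvdE)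
  have vb: "v b \<noteq> 0"
    using insert.prems by auto
  have "1 - x * v a \<noteq> 0" if "a \<in> A" for a
    using that insert.hyps insert.prems(1) vb by (auto simp: x_def field_simps inj_on_def)
  then have "poly (\<Prod>a\<in>A. [:1, - v a:]) x \<noteq> 0"
    using insert.hyps by (simp add: poly_prod algebra_simps)
  moreover have "poly p x = 0"
    using insert.prems by (simp add: x_def)
  ultimately have "poly q x = 0"
    by (simp add: q)
  then have "smult (- v b) [:- x, 1:] dvd q"
    using vb by (intro smult_dvd) (simp_all add: poly_eq_0_iff_dvd)
  then have "[:1, - v b:] dvd q"
    using vb by (simp add: x_def)
  then have "(\<Prod>a\<in>A. [:1, - v a:]) * [:1, - v b:] dvd p"
    unfolding q by (rule mult_dvd_mono [OF dvd_refl])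
  then show ?case
    by (simp only: prod.insert [OF insert.hyps] mult.commute)
qed simp

lemma fps_of_poly_times_inverse_nth_eq_0:
  fixes D p :: "'a::field poly"
  assumes "fps_of_poly D * H = 1" "D dvd p" "degree p < degree D + n"
  shows "(fps_of_poly p * H) $ n = 0"
proof -
  obtain q where q: "p = D * q"
    using assms(2) by (elim dvdE)
  have "D \<noteq> 0"
    using assms(1) by auto
  have "fps_of_poly p * H = fps_of_poly q"
    using assms(1) by (simp add: q fps_of_poly_mult mult_ac)
  moreover have "coeff q n = 0"
    using assms(3) \<open>D \<noteq> 0\<close> by (cases "q = 0") (auto simp: q degree_mult_eq intro: coeff_eq_0)
  ultimately show ?thesis by simp
qed

text \<open>For \<open>c = z\<^sup>h\<close> this is \<open>y\<^sup>h\<close> times the kernel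
  \<open>1 - z\<^sup>h (y\<^sup>-\<^sup>h + \<dots> + y\<^sup>h)\<close> of the walks.\<close>
definition kernel_poly :: "nat \<Rightarrow> 'a \<Rightarrow> 'a::comm_ring_1 poly" where
  "kernel_poly h c = monom 1 h - smult c (\<Sum>d=0..2*h. monom 1 d)"

lemma poly_kernel_poly: "poly (kernel_poly h c) x = x ^ h - c * (\<Sum>d=0..2*h. x ^ d)"
  by (simp add: kernel_poly_def poly_monom poly_sum)

lemma fps_of_poly_kernel_poly:
  "fps_of_poly (kernel_poly h c) = fps_X ^ h - fps_const c * (\<Sum>d=0..2*h. fps_X ^ d)"
  by (simp add: kernel_poly_def fps_of_poly_diff fps_of_poly_smult fps_of_poly_sum fps_of_poly_monom')

lemma degree_kernel_poly: "degree (kernel_poly h c) \<le> 2*h"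
  by (rule degree_le) (auto simp: kernel_poly_def coeff_sum coeff_monom)

lemma poly_kernel_poly_inverse:
  fixes v c :: "'a::field"
  assumes "v \<noteq> 0" and "poly (kernel_poly h c) v = 0"
  shows "poly (kernel_poly h c) (inverse v) = 0"
proof -
  have rev: "v ^ (2*h) * inverse v ^ d = v ^ (2*h - d)" if "d \<le> 2*h" for d
    using assms(1) that by (simp add: power_diff power_inverse divide_inverse)
  have "v ^ (2*h) * poly (kernel_poly h c) (inverse v) =
      v ^ (2*h) * inverse v ^ h - c * (\<Sum>d=0..2*h. v ^ (2*h) * inverse v ^ d)"
    by (simp add: poly_kernel_poly algebra_simps sum_distrib_left)
  also have "(\<Sum>d=0..2*h. v ^ (2*h) * inverse v ^ d) = (\<Sum>d=0..2*h. v ^ (2*h - d))"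
    by (intro sum.cong) (simp_all add: rev)
  also have "\<dots> = (\<Sum>d=0..2*h. v ^ d)"
    using sum.atLeastAtMost_rev [of "\<lambda>d. v ^ d" 0 "2*h"] by simp
  also have "v ^ (2*h) * inverse v ^ h = v ^ h"
    using rev [of h] by simp
  finally show ?thesis
    using assms by (simp add: poly_kernel_poly)
qed

lemma sum_fps_X_power_times_nth:
  "(\<Sum>d=0..2*h. fps_X ^ d * f) $ (k + h) = (\<Sum>j=k-h..k+h. f $ j)"
proof -
  have "(\<Sum>d=0..2*h. fps_X ^ d * f) $ (k + h) = (\<Sum>d\<in>{0..min (2*h) (k+h)}. f $ (k + h - d))"
    by (simp add: fps_sum_nth fps_X_power_mult_nth) (rule sum.mono_neutral_cong_right; auto)
  also have "\<dots> = (\<Sum>j=k-h..k+h. f $ j)"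
    by (rule sum.reindex_bij_witness [where i="\<lambda>j. k + h - j" and j="\<lambda>d. k + h - d"]) auto
  finally show ?thesis .
qed

text \<open>For \<open>k < h\<close> the truncated \<open>k - h\<close> drops exactly the missing negative indices.\<close>
theorem complete_homogeneous_recurrence:
  fixes v :: "'b \<Rightarrow> 'a::field"
  assumes "finite A" "card A = h" "inj_on v A" "\<And>a. a \<in> A \<Longrightarrow> v a \<noteq> 0"
    and "\<And>a. a \<in> A \<Longrightarrow> v a ^ h = c * (\<Sum>d=0..2*h. v a ^ d)" and "k \<ge> 1"
  shows "complete_homogeneous A v k = c * (\<Sum>j=k-h..k+h. complete_homogeneous A v j)"
proof -
  define D where "D = (\<Prod>a\<in>A. [:1, - v a:])"
  define H where "H = (\<Prod>a\<in>A. inverse (1 - fps_const (v a) * fps_X))"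
  have "fps_of_poly D * H = (\<Prod>a\<in>A. (1 - fps_const (v a) * fps_X) * inverse (1 - fps_const (v a) * fps_X))"
    by (simp add: D_def H_def fps_of_poly_prod prod.distrib fps_of_poly_linear' flip: fps_const_neg)
  also have "\<dots> = 1"
    by (intro prod.neutral ballI inverse_mult_eq_1') simp
  finally have DH: "fps_of_poly D * H = 1" .
  have "D dvd kernel_poly h c"
    unfolding D_def using assms
    by (intro prod_one_minus_linear_dvd poly_kernel_poly_inverse) (auto simp: poly_kernel_poly)
  moreover have "degree D = h"
    using assms by (simp add: D_def degree_prod_eq_sum_degree)
  ultimately have "(fps_of_poly (kernel_poly h c) * H) $ (k + h) = 0"
    using assms(6) degree_kernel_poly [of h c] by (intro fps_of_poly_times_inverse_nth_eq_0 [OF DH]) auto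
  moreover have "fps_of_poly (kernel_poly h c) * H = fps_X ^ h * H - fps_const c * (\<Sum>d=0..2*h. fps_X ^ d * H)"
    by (simp add: fps_of_poly_kernel_poly left_diff_distrib mult.assoc sum_distrib_right)
  then have "(fps_of_poly (kernel_poly h c) * H) $ (k + h) = H $ k - c * (\<Sum>j=k-h..k+h. H $ j)"
    by (simp add: fps_X_power_mult_nth sum_fps_X_power_times_nth)
  ultimately show ?thesis
    using assms(1) by (simp add: H_def prod_inverse_one_minus_const_fps_X_nth)
qed

lemma fps_to_fls_sum: "fps_to_fls (\<Sum>x\<in>A. f x) = (\<Sum>x\<in>A. fps_to_fls (f x))"
  by (induction A rule: infinite_finite_induct) auto

lemma fps_to_fls_prod: "fps_to_fls (\<Prod>x\<in>A. f x) = (\<Prod>x\<in>A. fps_to_fls (f x))"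
  by (induction A rule: infinite_finite_induct) (auto simp: fls_times_fps_to_fls)

lemma fps_to_fls_complete_homogeneous:
  "fps_to_fls (complete_homogeneous A v k) = complete_homogeneous A (\<lambda>a. fps_to_fls (v a)) k"
  by (simp add: complete_homogeneous_def fps_to_fls_sum fps_to_fls_prod fps_to_fls_power)

lemma fps_prod_nth_0: "(\<Prod>a\<in>A. f a) $ 0 = (\<Prod>a\<in>A. f a $ 0)"
  by (induction A rule: infinite_finite_induct) auto

lemma complete_homogeneous_nth_0:
  "complete_homogeneous A v k $ 0 = complete_homogeneous A (\<lambda>a. v a $ 0) k"
  by (simp add: complete_homogeneous_def fps_sum_nth fps_prod_nth_0 fps_nth_power_0)

section \<open>The small roots of the kernel\<close>

lemma omega_power: "omega h ^ a = exp (2 * of_real pi * \<i> * of_nat a / of_nat h)"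
  unfolding omega_def exp_of_nat_mult [symmetric] by (simp add: field_simps)

lemma omega_power_self: "h \<ge> 1 \<Longrightarrow> omega h ^ h = 1"
  using complex_root_unity [of h 1] by (simp add: omega_power)

lemma omega_power_inj:
  assumes "h \<ge> 1" "a < h" "b < h" "omega h ^ a = omega h ^ b"
  shows "a = b"
  using assms complex_root_unity_eq [of h a b] by (simp add: omega_power)

lemma of_real_gbinomial: "of_real (a gchoose k) = (of_real a :: 'a::real_field) gchoose k"
  by (simp add: gbinomial_prod_rev of_real_prod)

lemma of_real_fps_power_nth:
  fixes g :: "'a::real_algebra_1 fps" and g' :: "real fps"
  assumes "\<And>n. g $ n = of_real (g' $ n)"
  shows "(g ^ i) $ n = of_real ((g' ^ i) $ n)"
proof (induction i arbitrary: n)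
  case (Suc i)
  then show ?case by (simp add: fps_mult_nth assms of_real_sum)
qed simp

lemma of_real_fps_compose_nth:
  fixes f g :: "'a::real_algebra_1 fps" and f' g' :: "real fps"
  assumes "\<And>n. f $ n = of_real (f' $ n)" "\<And>n. g $ n = of_real (g' $ n)"
  shows "(f oo g) $ n = of_real ((f' oo g') $ n)"
  by (simp add: fps_compose_nth assms of_real_fps_power_nth [OF assms(2)] of_real_sum)

definition walk_phi :: "nat \<Rightarrow> complex fps" where
  "walk_phi h = fps_binomial (1 / of_nat h) oo (\<Sum>j=1..<2*h+1. fps_X ^ j)"

definition kernel_root :: "nat \<Rightarrow> complex fps" where
  "kernel_root h = lagrange_inverse (walk_phi h)"

definition small_root :: "nat \<Rightarrow> nat \<Rightarrow> complex fps" where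
  "small_root h j = kernel_root h oo (fps_const (omega h ^ (j - 1)) * fps_X)"

lemma walk_phi_nth_0: "walk_phi h $ 0 = 1"
  by (simp add: walk_phi_def)

lemma walk_phi_power: "walk_phi h ^ n = fps_binomial (of_nat n / of_nat h) oo (\<Sum>j=1..<2*h+1. fps_X ^ j)"
  unfolding walk_phi_def by (simp add: fps_compose_power fps_sum_nth fps_binomial_power)

lemma of_real_gbinom_m:
  "complex_of_real (gbinom_m (real n / real h) (2*h+1) k) = (if k < 0 then 0 else (walk_phi h ^ n) $ nat k)"
  unfolding gbinom_m_def walk_phi_power
  by (auto intro!: of_real_fps_compose_nth [symmetric] simp: of_real_gbinomial fps_sum_nth)

lemma kernel_root_power_nth: "(kernel_root h ^ i) $ n = Ufac h i n"
proof (cases "n = 0")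
  case True
  then show ?thesis
    by (cases i) (simp_all add: Ufac_def kernel_root_def lagrange_inverse_nth_0 walk_phi_nth_0)
next
  case False
  then have "of_nat n * (kernel_root h ^ i) $ n = of_nat i * (if i \<le> n then (walk_phi h ^ n) $ (n - i) else 0)"
    unfolding kernel_root_def by (intro lagrange_inversion walk_phi_nth_0) simp
  then show ?thesis
    unfolding Ufac_def of_real_gbinom_m using False by (simp add: nat_diff_distrib field_simps)
qed

lemma kernel_root_equation:
  assumes "h \<ge> 1"
  shows "kernel_root h ^ h = fps_X ^ h * (\<Sum>d=0..2*h. kernel_root h ^ d)"
proof -
  let ?U = "kernel_root h"
  have U_0: "?U $ 0 = 0"
    by (simp add: kernel_root_def lagrange_inverse_nth_0 walk_phi_nth_0)
  have "?U ^ h = fps_X ^ h * (walk_phi h ^ h oo ?U)"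
    using lagrange_inverse_eq [OF walk_phi_nth_0]
    by (metis kernel_root_def power_mult_distrib fps_compose_power [OF U_0])
  also have "walk_phi h ^ h = 1 + (\<Sum>d=1..<2*h+1. fps_X ^ d)"
    using assms by (simp add: walk_phi_power fps_binomial_1 fps_compose_add_distrib fps_sum_nth)
  also have "\<dots> = (\<Sum>d=0..2*h. fps_X ^ d)"
    by (simp add: sum.atLeast_Suc_atMost atLeastLessThanSuc_atLeastAtMost)
  finally show ?thesis
    by (simp add: fps_compose_sum_distrib fps_X_power_compose [OF U_0])
qed

lemma small_root_power: "small_root h j ^ i = kernel_root h ^ i oo (fps_const (omega h ^ (j - 1)) * fps_X)"
  unfolding small_root_def by (rule fps_compose_power) simp

lemma small_root_power_nth: "(small_root h j ^ i) $ n = omega h ^ ((j - 1) * n) * Ufac h i n"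
  by (simp add: small_root_power fps_compose_linear kernel_root_power_nth power_mult)

lemma small_root_nth_0: "small_root h j $ 0 = 0"
  using small_root_power_nth [of h j 1 0] by (simp add: Ufac_def)

lemma small_root_nth_1: "small_root h j $ 1 = omega h ^ (j - 1)"
  using small_root_power_nth [of h j 1 1] by (simp add: Ufac_def gbinom_m_def)

lemma small_root_equation:
  assumes "h \<ge> 1"
  shows "small_root h j ^ h = fps_X ^ h * (\<Sum>d=0..2*h. small_root h j ^ d)"
proof -
  define c where "c = fps_const (omega h ^ (j - 1)) * fps_X"
  have c_0: "c $ 0 = 0"
    by (simp add: c_def)
  have "c ^ h = fps_X ^ h"
    using omega_power_self [OF assms]
    by (simp add: c_def power_mult_distrib fps_const_power flip: power_mult) (simp add: power_mult mult.commute)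
  then have "kernel_root h ^ h oo c = fps_X ^ h * (\<Sum>d=0..2*h. kernel_root h ^ d oo c)"
    using arg_cong [OF kernel_root_equation [OF assms], of "\<lambda>f. f oo c"]
    by (simp add: fps_compose_mult_distrib [OF c_0] fps_X_power_compose [OF c_0] fps_compose_sum_distrib)
  then show ?thesis
    unfolding small_root_power c_def [symmetric] .
qed

lemma inj_on_small_root:
  assumes "h \<ge> 1"
  shows "inj_on (small_root h) {1..h}"
proof (rule inj_onI)
  fix i j assume ij: "i \<in> {1..h}" "j \<in> {1..h}" "small_root h i = small_root h j"
  then have "omega h ^ (i - 1) = omega h ^ (j - 1)"
    by (metis small_root_nth_1)
  moreover have "i - 1 < h" "j - 1 < h"
    using ij by auto
  ultimately have "i - 1 = j - 1"
    using omega_power_inj [OF assms] by blast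
  then show "i = j"
    using ij by auto
qed

lemma small_root_nonzero: "small_root h j \<noteq> 0"
  using small_root_nth_1 [of h j] by (auto simp: omega_def)

section \<open>Counting positive walks\<close>

text \<open>\<open>walk_gf h k\<close> is \<open>G\<^sub>0\<^sub>,\<^sub>k(z\<^sup>h) = h\<^sub>k(U(z), U(\<omega>z), \<dots>, U(\<omega>\<^sup>h\<^sup>-\<^sup>1z))\<close>.\<close>
definition walk_gf :: "nat \<Rightarrow> nat \<Rightarrow> complex fps" where
  "walk_gf h k = complete_homogeneous {1..h} (small_root h) k"

lemma walk_gf_0: "walk_gf h 0 = 1"
  by (simp add: walk_gf_def complete_homogeneous_0)

lemma walk_gf_nth_0: "k \<ge> 1 \<Longrightarrow> walk_gf h k $ 0 = 0"
  unfolding walk_gf_def complete_homogeneous_nth_0 small_root_nth_0 by (rule complete_homogeneous_zero)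

lemma walk_gf_recurrence:
  assumes "h \<ge> 1" "k \<ge> 1"
  shows "walk_gf h k = fps_X ^ h * (\<Sum>j=k-h..k+h. walk_gf h j)"
proof -
  let ?v = "\<lambda>j. fps_to_fls (small_root h j)"
  have "inj_on ?v {1..h}"
  proof (rule inj_onI)
    fix i j assume "i \<in> {1..h}" "j \<in> {1..h}" "?v i = ?v j"
    then show "i = j"
      by (intro inj_onD [OF inj_on_small_root [OF assms(1)]]) simp_all
  qed
  moreover have "?v j ^ h = fls_X ^ h * (\<Sum>d=0..2*h. ?v j ^ d)" for j
    using arg_cong [OF small_root_equation [OF assms(1)], of fps_to_fls]
    by (simp add: fps_to_fls_power fls_times_fps_to_fls fps_to_fls_sum)
  ultimately have "complete_homogeneous {1..h} ?v k = fls_X ^ h * (\<Sum>j=k-h..k+h. complete_homogeneous {1..h} ?v j)"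
    using assms by (intro complete_homogeneous_recurrence) (auto simp: small_root_nonzero)
  then have "fps_to_fls (walk_gf h k) = fps_to_fls (fps_X ^ h * (\<Sum>j=k-h..k+h. walk_gf h j))"
    by (simp add: walk_gf_def fps_to_fls_complete_homogeneous fls_times_fps_to_fls fps_to_fls_power
        fps_to_fls_sum)
  then show ?thesis by simp
qed

lemma walk_gf_nth:
  "walk_gf h k $ N = (\<Sum>ns\<in>tuples_sum h N. \<Sum>is\<in>tuples_sum h k. term46 h ns is)"
proof -
  have "walk_gf h k $ N = (\<Sum>is\<in>tuples_sum h k. \<Sum>ns\<in>tuples_sum h N. \<Prod>j=1..h. (small_root h j ^ is j) $ ns j)"
    by (simp add: walk_gf_def complete_homogeneous_def fps_sum_nth fps_prod_nth_weak_compositions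
        tuples_sum_def weak_compositions_def)
  also have "\<dots> = (\<Sum>is\<in>tuples_sum h k. \<Sum>ns\<in>tuples_sum h N. term46 h ns is)"
    by (simp add: small_root_power_nth term46_def prod.distrib power_sum mult.commute)
  finally show ?thesis
    by (rule trans) (rule sum.swap)
qed

lemma finite_pos_walks: "finite (pos_walks h n k)"
proof (rule finite_subset)
  show "pos_walks h n k \<subseteq> {s. set s \<subseteq> {- int h..int h} \<and> length s = n}"
    by (auto simp: pos_walks_def)
qed (rule finite_lists_length_eq, simp)

lemma pos_walks_0: "pos_walks h 0 k = (if k = 0 then {[]} else {})"
  by (auto simp: pos_walks_def)

lemma pos_walks_endpoint_pos: "s \<in> pos_walks h n k \<Longrightarrow> n \<ge> 1 \<Longrightarrow> k \<ge> 1"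
  by (auto simp: pos_walks_def dest: bspec [of _ _ n])

lemma pos_walks_endpoint_nonneg: "s \<in> pos_walks h n k \<Longrightarrow> k \<ge> 0"
  by (cases n) (auto simp: pos_walks_0 split: if_splits dest: pos_walks_endpoint_pos)

lemma snoc_in_pos_walks_iff:
  assumes "k \<ge> 1"
  shows "s @ [d] \<in> pos_walks h (Suc n) k \<longleftrightarrow> d \<in> {- int h..int h} \<and> s \<in> pos_walks h n (k - d)"
proof -
  have "(\<forall>i\<in>{1..Suc n}. sum_list (take i (s @ [d])) \<ge> 1) \<longleftrightarrow> (\<forall>i\<in>{1..n}. sum_list (take i s) \<ge> 1)"
    if "length s = n" "sum_list s + d = k"
  proof -
    have "{1..Suc n} = insert (Suc n) {1..n}"
      by auto
    moreover have "take i (s @ [d]) = take i s" if "i \<in> {1..n}" for i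
      using that \<open>length s = n\<close> by simp
    ultimately show ?thesis
      using that assms by auto
  qed
  then show ?thesis
    by (auto simp: pos_walks_def algebra_simps)
qed

lemma pos_walks_Suc:
  assumes "k \<ge> 1"
  shows "pos_walks h (Suc n) (int k) =
    (\<lambda>(j, s). s @ [int k - int j]) ` (SIGMA j:{k-h..k+h}. pos_walks h n (int j))"
proof (intro equalityI subsetI)
  fix s assume s: "s \<in> pos_walks h (Suc n) (int k)"
  then have "s = butlast s @ [last s]"
    by (auto simp: pos_walks_def intro!: append_butlast_last_id [symmetric])
  with s have step: "last s \<in> {- int h..int h}" and walk: "butlast s \<in> pos_walks h n (int k - last s)"
    using assms snoc_in_pos_walks_iff [of "int k" "butlast s" "last s" h n] by auto
  moreover have "int k - last s \<ge> 0"
    using walk by (rule pos_walks_endpoint_nonneg)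
  ultimately show "s \<in> (\<lambda>(j, s). s @ [int k - int j]) ` (SIGMA j:{k-h..k+h}. pos_walks h n (int j))"
    using \<open>s = butlast s @ [last s]\<close>
    by (intro image_eqI [where x="(nat (int k - last s), butlast s)"]) auto
next
  fix s assume "s \<in> (\<lambda>(j, s). s @ [int k - int j]) ` (SIGMA j:{k-h..k+h}. pos_walks h n (int j))"
  then show "s \<in> pos_walks h (Suc n) (int k)"
    using assms by (auto simp: snoc_in_pos_walks_iff)
qed

lemma card_pos_walks_Suc:
  assumes "k \<ge> 1"
  shows "card (pos_walks h (Suc n) (int k)) = (\<Sum>j=k-h..k+h. card (pos_walks h n (int j)))"
proof -
  have "inj_on (\<lambda>(j, s). s @ [int k - int j]) (SIGMA j:{k-h..k+h}. pos_walks h n (int j))"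
    by (auto simp: inj_on_def)
  then show ?thesis
    unfolding pos_walks_Suc [OF assms] by (simp add: card_image card_SigmaI finite_pos_walks)
qed

theorem card_pos_walks_eq_walk_gf_nth:
  assumes "h \<ge> 1"
  shows "of_nat (card (pos_walks h n (int k))) = walk_gf h k $ (n * h)"
proof (induction n arbitrary: k)
  case 0
  then show ?case
    by (cases "k = 0") (simp_all add: pos_walks_0 walk_gf_0 walk_gf_nth_0)
next
  case (Suc n)
  show ?case
  proof (cases "k = 0")
    case True
    have "pos_walks h (Suc n) 0 = {}"
      using pos_walks_endpoint_pos [of _ h "Suc n" 0] by fastforce
    then show ?thesis
      using assms True by (simp add: walk_gf_0)
  next
    case False
    then have "of_nat (card (pos_walks h (Suc n) (int k))) = (\<Sum>j=k-h..k+h. walk_gf h j $ (n * h))"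
      by (simp add: card_pos_walks_Suc Suc.IH)
    also have "\<dots> = walk_gf h k $ (Suc n * h)"
      using assms False by (subst walk_gf_recurrence) (auto simp: fps_X_power_mult_nth fps_sum_nth)
    finally show ?thesis .
  qed
qed

lemma pos_meanders_eq_Union_pos_walks: "pos_meanders h n = (\<Union>k\<le>n*h. pos_walks h n (int k))"
proof (intro equalityI subsetI)
  fix s assume "s \<in> pos_meanders h n"
  then have walk: "s \<in> pos_walks h n (sum_list s)"
    by (simp add: pos_meanders_def pos_walks_def)
  have "sum_list s \<le> int (length s * h)" if "set s \<subseteq> {- int h..int h}"
    using that by (induction s) auto
  then have "sum_list s \<le> int (n * h)"
    using walk by (simp add: pos_walks_def)
  with pos_walks_endpoint_nonneg [OF walk] walk show "s \<in> (\<Union>k\<le>n*h. pos_walks h n (int k))"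
    by (intro UN_I [of "nat (sum_list s)"]) (auto simp: nat_le_iff)
qed (auto simp: pos_meanders_def pos_walks_def)

lemma card_pos_meanders: "card (pos_meanders h n) = (\<Sum>k\<le>n*h. card (pos_walks h n (int k)))"
  unfolding pos_meanders_eq_Union_pos_walks
  by (rule card_UN_disjoint) (simp_all add: finite_pos_walks, auto simp: pos_walks_def)

lemma Ufac_eq_0: "i > n \<Longrightarrow> Ufac h i n = 0"
  by (simp add: Ufac_def gbinom_m_def)

lemma term46_eq_0: "j \<in> {1..h} \<Longrightarrow> is j > ns j \<Longrightarrow> term46 h ns is = 0"
  by (auto simp: term46_def Ufac_eq_0 intro!: prod_zero bexI [of _ j])

lemma infsum_term46:
  assumes "ns \<in> tuples_sum h N"
  shows "infsum (term46 h ns) ({1..h} \<rightarrow>\<^sub>E UNIV) = (\<Sum>k\<le>N. \<Sum>is\<in>tuples_sum h k. term46 h ns is)"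
proof -
  define C where "C = (\<Union>k\<le>N. tuples_sum h k)"
  have "(\<Sum>k\<le>N. \<Sum>is\<in>tuples_sum h k. term46 h ns is) = sum (term46 h ns) C"
    unfolding C_def tuples_sum_def
    by (rule sum.UNION_disjoint [symmetric]) (auto simp: finite_weak_compositions [unfolded weak_compositions_def])
  moreover have "infsum (term46 h ns) ({1..h} \<rightarrow>\<^sub>E UNIV) = infsum (term46 h ns) C"
  proof (rule infsum_cong_neutral)
    fix x assume x: "x \<in> ({1..h} \<rightarrow>\<^sub>E UNIV) - C"
    then have "sum x {1..h} > sum ns {1..h}"
      using assms by (auto simp: C_def tuples_sum_def not_le)
    then obtain j where "j \<in> {1..h}" "x j > ns j"
      by (meson not_le sum_mono)
    then show "term46 h ns x = 0"
      by (rule term46_eq_0)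
  qed (auto simp: C_def tuples_sum_def)
  moreover have "finite C"
    by (auto simp: C_def tuples_sum_def intro: finite_weak_compositions [unfolded weak_compositions_def])
  ultimately show ?thesis
    by simp
qed

theorem theorem4p6:
  fixes h n k :: nat
  assumes "h \<ge> 1" and "k \<ge> 1"
  shows "of_nat (card (pos_walks h n (int k))) =
           (\<Sum>ns\<in>tuples_sum h (n*h). \<Sum>is\<in>tuples_sum h k. term46 h ns is)
       \<and> of_nat (card (pos_meanders h n)) =
           (\<Sum>ns\<in>tuples_sum h (n*h). infsum (term46 h ns) ({1..h} \<rightarrow>\<^sub>E (UNIV :: nat set)))"
proof
  show "of_nat (card (pos_walks h n (int k))) =
      (\<Sum>ns\<in>tuples_sum h (n*h). \<Sum>is\<in>tuples_sum h k. term46 h ns is)"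
    using card_pos_walks_eq_walk_gf_nth [OF assms(1)] by (simp add: walk_gf_nth)
next
  have "(of_nat (card (pos_meanders h n)) :: complex) =
      (\<Sum>k\<le>n*h. \<Sum>ns\<in>tuples_sum h (n*h). \<Sum>is\<in>tuples_sum h k. term46 h ns is)"
    using card_pos_walks_eq_walk_gf_nth [OF assms(1)] by (simp add: card_pos_meanders walk_gf_nth)
  also have "\<dots> = (\<Sum>ns\<in>tuples_sum h (n*h). \<Sum>k\<le>n*h. \<Sum>is\<in>tuples_sum h k. term46 h ns is)"
    by (rule sum.swap)
  also have "\<dots> = (\<Sum>ns\<in>tuples_sum h (n*h). infsum (term46 h ns) ({1..h} \<rightarrow>\<^sub>E UNIV))"
    by (intro sum.cong refl infsum_term46 [symmetric])
  finally show "of_nat (card (pos_meanders h n)) =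
      (\<Sum>ns\<in>tuples_sum h (n*h). infsum (term46 h ns) ({1..h} \<rightarrow>\<^sub>E (UNIV :: nat set)))" .
qed

end
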